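(* Let $M, N \geq 1$ be integers and let $\phi_1(x), \ldots, \phi_{MN}(x)$ be sufficiently differentiable $N$-vector valued functions of $x$. Let $\Phi$ be the $MN \times MN$ block Wronskian matrix $$\Phi=\begin{pmatrix} \phi_1&\phi_2&\cdots&\phi_{MN}\\ \phi_1'&\phi_2'&\cdots&\phi_{MN}'\\ \vdots&\vdots&\ddots&\vdots\\ \phi_1^{(M-1)}&\phi_2^{(M-1)}&\cdots&\phi_{MN}^{(M-1)} \end{pmatrix},$$ whose first $N$ rows are the columns $\phi_i$ and every other entry is the derivative of the entry $N$ rows above it. Suppose $\det \Phi \neq 0$, so that $\Phi^{-1}$ is defined. Let $C_0, \ldots, C_{M-1}$ be the $N\times N$ matrix functions defined by the block decomposition $$(C_0\ C_1\ \cdots\ C_{M-1}) = \left(\phi_1^{(M)}\ \cdots\ \phi_{MN}^{(M)}\right)\Phi^{-1},$$ and define the matrix differential operator $$K = I\,\partial^M - \sum_{j=0}^{M-1} C_j(x)\,\partial^j,$$ which is written in matrix notation as $K=I\,\partial^M-\left(\phi_1^{(M)}\ \cdots\ \phi_{MN}^{(M)}\right)\Phi^{-1}\begin{pmatrix} I\\ \partial I\\ \vdots\\ \partial^{M-1}I\end{pmatrix}$. Then: (a) $K$ is the unique monic MODO of order $M$ such that $K(\phi_i) = 0$ for all $1 \leq i \leq MN$. (b) If $L$ is any MODO such that $L(\phi_i) = 0$ for all $1 \leq i \leq MN$, then there exists a MODO $Q$ such that $L = Q \circ K$.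
   Context: All functions are assumed to be sufficiently differentiable functions of $x$. A matrix coefficient ordinary differential operator (MODO) is a polynomial $L=\sum_{i=0}^n \alpha_i(x)\partial^i$ in $\partial$ whose coefficients $\alpha_i(x)$ are $N\times N$ matrix-valued functions of $x$. Such an operator acts on an $N$-vector valued function $f$ by $L(f)=\sum_{i=0}^n \alpha_i(x) f^{(i)}(x)$, with matrix-vector products. MODOs are added coefficientwise. They are multiplied by extending linearly the rule $$\left(\alpha(x)\partial^m\right)\circ\left(\beta(x)\partial^n\right)=\sum_{i=0}^m \binom{m}{i}\alpha(x)\beta^{(i)}(x)\partial^{m+n-i},$$ in which the products of coefficients are matrix products. With this rule, $(L\circ Q)(f) = L(Q(f))$. The order of a MODO is the highest power of $\partial$ that appears with a nonzero coefficient. A MODO of order $M$ is monic if its coefficient of $\partial^M$ is the $N\times N$ identity matrix $I$. The symbol $0$ in $L(\phi_i)=0$ denotes the zero vector. *)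

theory Defs
  imports "HOL-Analysis.Analysis" "Jordan_Normal_Form.Determinant"
begin

definition smooth :: "(real \<Rightarrow> real) \<Rightarrow> bool" where
  "smooth f \<longleftrightarrow> (\<forall>k x. (deriv ^^ k) f differentiable (at x))"

definition inv_mat :: "real mat \<Rightarrow> real mat" where
  "inv_mat A = (THE B. B \<in> carrier_mat (dim_row A) (dim_row A) \<and>
                  A * B = 1\<^sub>m (dim_row A) \<and> B * A = 1\<^sub>m (dim_row A))"

text \<open>A MODO with N x N coefficients: L k x is the coefficient of the k-th power
  of the derivative at the point x. Coefficients are smooth, finitely many nonzero.\<close>
type_synonym modo = "nat \<Rightarrow> real \<Rightarrow> real mat"

definition is_modo :: "nat \<Rightarrow> modo \<Rightarrow> bool" where
  "is_modo N L \<longleftrightarrow> (\<forall>k x. L k x \<in> carrier_mat N N)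
     \<and> (\<forall>k i j. i < N \<longrightarrow> j < N \<longrightarrow> smooth (\<lambda>x. L k x $$ (i, j)))
     \<and> (\<exists>d. \<forall>k>d. \<forall>x. L k x = 0\<^sub>m N N)"

definition modo_bound :: "nat \<Rightarrow> modo \<Rightarrow> nat" where
  "modo_bound N L = (LEAST d. \<forall>k>d. \<forall>x. L k x = 0\<^sub>m N N)"

text \<open>Action of a MODO on an N-vector valued function f, given by its component
  functions f s (s < N); the result is again given componentwise.\<close>
definition modo_apply :: "nat \<Rightarrow> modo \<Rightarrow> (nat \<Rightarrow> real \<Rightarrow> real) \<Rightarrow> nat \<Rightarrow> real \<Rightarrow> real" where
  "modo_apply N L f r x =
     (\<Sum>k\<le>modo_bound N L. \<Sum>s<N. L k x $$ (r, s) * (deriv ^^ k) (f s) x)"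

definition annihilates :: "nat \<Rightarrow> modo \<Rightarrow> (nat \<Rightarrow> real \<Rightarrow> real) \<Rightarrow> bool" where
  "annihilates N L f \<longleftrightarrow> (\<forall>r<N. \<forall>x. modo_apply N L f r x = 0)"

text \<open>Composition of MODOs, via the Leibniz rule
  (a D^m) o (b D^n) = sum_i (m choose i) a b^(i) D^(m+n-i).\<close>
definition modo_comp :: "nat \<Rightarrow> modo \<Rightarrow> modo \<Rightarrow> modo" where
  "modo_comp N A B k x = mat N N (\<lambda>(r, s).
     \<Sum>m\<le>modo_bound N A. \<Sum>n\<le>modo_bound N B. \<Sum>i\<le>m.
        (if m + n - i = k then
           of_nat (m choose i) *
             (\<Sum>t<N. A m x $$ (r, t) * (deriv ^^ i) (\<lambda>y. B n y $$ (t, s)) x)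
         else 0))"

definition monic_modo :: "nat \<Rightarrow> nat \<Rightarrow> modo \<Rightarrow> bool" where
  "monic_modo N M L \<longleftrightarrow> is_modo N L \<and> (\<forall>x. L M x = 1\<^sub>m N)
     \<and> (\<forall>k>M. \<forall>x. L k x = 0\<^sub>m N N)"

text \<open>Block Wronskian: phi i r is the r-th component (r < N) of phi_(i+1) (i < M*N).
  Row a = j*N + r holds the j-th derivative of the r-th components.\<close>
definition wronskian :: "nat \<Rightarrow> nat \<Rightarrow> (nat \<Rightarrow> nat \<Rightarrow> real \<Rightarrow> real) \<Rightarrow> real \<Rightarrow> real mat" where
  "wronskian M N phi x = mat (M * N) (M * N)
     (\<lambda>(a, i). (deriv ^^ (a div N)) (phi i (a mod N)) x)"

definition top_deriv_row :: "nat \<Rightarrow> nat \<Rightarrow> (nat \<Rightarrow> nat \<Rightarrow> real \<Rightarrow> real) \<Rightarrow> real \<Rightarrow> real mat" where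
  "top_deriv_row M N phi x = mat N (M * N) (\<lambda>(r, i). (deriv ^^ M) (phi i r) x)"

definition coeffC :: "nat \<Rightarrow> nat \<Rightarrow> (nat \<Rightarrow> nat \<Rightarrow> real \<Rightarrow> real) \<Rightarrow> nat \<Rightarrow> real \<Rightarrow> real mat" where
  "coeffC M N phi j x =
     (let C = top_deriv_row M N phi x * inv_mat (wronskian M N phi x)
      in mat N N (\<lambda>(r, s). C $$ (r, j * N + s)))"

definition Kop :: "nat \<Rightarrow> nat \<Rightarrow> (nat \<Rightarrow> nat \<Rightarrow> real \<Rightarrow> real) \<Rightarrow> modo" where
  "Kop M N phi k x =
     (if k = M then 1\<^sub>m N else if k < M then - coeffC M N phi k x else 0\<^sub>m N N)"

end

theory Submission
  imports Defs
begin

text \<open>For a monic K of order M, the conditions K(\<phi>_i) = 0 say that the row of lower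
  coefficients (C_0 \<dots> C_(M-1)) times the block Wronskian \<Phi> equals the row of the
  \<phi>_i^(M); as \<Phi> is invertible this linear system has exactly one solution, which is (a).
  For (b), divide L on the left by the monic K, L = Q \<circ> K + R with R of order below M.
  Composition of operators is composition of their actions (Leibniz rule), so R annihilates every
  \<phi>_i; its coefficient rows are then left null vectors of \<Phi>, hence R = 0.\<close>

section \<open>Smooth functions\<close>

text \<open>Closure of smoothness under products and inverses is proved by induction on a finite
  order of differentiability, since differentiating a product lowers the regularity of the factors.\<close>

definition differentiable_upto :: "nat \<Rightarrow> (real \<Rightarrow> real) \<Rightarrow> bool" where
  "differentiable_upto k h \<longleftrightarrow> (\<forall>j\<le>k. \<forall>x. (deriv ^^ j) h differentiable (at x))"

lemma smooth_iff_differentiable_upto: "smooth h \<longleftrightarrow> (\<forall>k. differentiable_upto k h)"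
  unfolding smooth_def differentiable_upto_def by blast

lemma differentiable_upto_0: "differentiable_upto 0 h \<longleftrightarrow> (\<forall>x. h differentiable (at x))"
  unfolding differentiable_upto_def by simp

lemma differentiable_upto_Suc:
  "differentiable_upto (Suc k) h \<longleftrightarrow>
     (\<forall>x. h differentiable (at x)) \<and> differentiable_upto k (deriv h)"
proof -
  have "(\<forall>j\<le>Suc k. P j) \<longleftrightarrow> P 0 \<and> (\<forall>j\<le>k. P (Suc j))" for P
    by (metis Suc_le_mono le0 not0_implies_Suc)
  thus ?thesis
    unfolding differentiable_upto_def by (simp add: funpow_Suc_right del: funpow.simps)
qed

lemma differentiable_upto_mono: "differentiable_upto k h \<Longrightarrow> j \<le> k \<Longrightarrow> differentiable_upto j h"
  unfolding differentiable_upto_def by auto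

lemma deriv_fun_add:
  fixes f g :: "real \<Rightarrow> real"
  shows "(\<And>x. f differentiable (at x)) \<Longrightarrow> (\<And>x. g differentiable (at x)) \<Longrightarrow>
    deriv (\<lambda>x. f x + g x) = (\<lambda>x. deriv f x + deriv g x)"
  by (rule ext, rule DERIV_imp_deriv, intro DERIV_add)
     (auto simp: DERIV_deriv_iff_real_differentiable)

lemma deriv_fun_mult:
  fixes f g :: "real \<Rightarrow> real"
  shows "(\<And>x. f differentiable (at x)) \<Longrightarrow> (\<And>x. g differentiable (at x)) \<Longrightarrow>
    deriv (\<lambda>x. f x * g x) = (\<lambda>x. deriv f x * g x + f x * deriv g x)"
  by (rule ext, rule DERIV_imp_deriv, subst add.commute, intro DERIV_mult')
     (auto simp: DERIV_deriv_iff_real_differentiable)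

lemma deriv_fun_inverse:
  fixes f :: "real \<Rightarrow> real"
  shows "(\<And>x. f differentiable (at x)) \<Longrightarrow> (\<And>x. f x \<noteq> 0) \<Longrightarrow>
    deriv (\<lambda>x. inverse (f x)) = (\<lambda>x. - deriv f x * (inverse (f x) * inverse (f x)))"
  by (rule ext, rule DERIV_imp_deriv, rule derivative_eq_intros)
     (auto simp: DERIV_deriv_iff_real_differentiable)

lemma differentiable_upto_const: "differentiable_upto k (\<lambda>x. c)"
  by (induction k arbitrary: c) (simp_all add: differentiable_upto_0 differentiable_upto_Suc)

lemma differentiable_upto_add:
  "differentiable_upto k f \<Longrightarrow> differentiable_upto k g \<Longrightarrow> differentiable_upto k (\<lambda>x. f x + g x)"
  by (induction k arbitrary: f g)
     (simp_all add: differentiable_upto_0 differentiable_upto_Suc differentiable_add deriv_fun_add)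

lemma differentiable_upto_mult:
  "differentiable_upto k f \<Longrightarrow> differentiable_upto k g \<Longrightarrow> differentiable_upto k (\<lambda>x. f x * g x)"
proof (induction k arbitrary: f g)
  case 0
  thus ?case by (simp add: differentiable_upto_0 differentiable_mult)
next
  case (Suc k)
  have f: "\<forall>x. f differentiable (at x)" "differentiable_upto k (deriv f)" "differentiable_upto k f"
    using Suc.prems differentiable_upto_Suc differentiable_upto_mono[of "Suc k" f k] by auto
  have g: "\<forall>x. g differentiable (at x)" "differentiable_upto k (deriv g)" "differentiable_upto k g"
    using Suc.prems differentiable_upto_Suc differentiable_upto_mono[of "Suc k" g k] by auto
  show ?case
    using f g Suc.IH
    by (simp add: differentiable_upto_Suc differentiable_mult deriv_fun_mult differentiable_upto_add)
qed

lemma differentiable_upto_inverse: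
  assumes "\<And>j. differentiable_upto j f" and "\<And>x. f x \<noteq> 0"
  shows "differentiable_upto k (\<lambda>x. inverse (f x))"
proof (induction k)
  case 0
  have "\<forall>x. f differentiable (at x)" using assms(1)[of 0] by (simp add: differentiable_upto_0)
  thus ?case using assms(2) by (simp add: differentiable_upto_0 differentiable_inverse)
next
  case (Suc k)
  have f: "\<forall>x. f differentiable (at x)" "differentiable_upto k (deriv f)"
    using assms(1)[of "Suc k"] differentiable_upto_Suc by auto
  have "differentiable_upto k (\<lambda>x. - deriv f x * (inverse (f x) * inverse (f x)))"
    using differentiable_upto_mult[OF differentiable_upto_mult[OF differentiable_upto_const[of k "-1"] f(2)]
        differentiable_upto_mult[OF Suc.IH Suc.IH]]
    by simp
  thus ?case
    using f assms(2) by (simp add: differentiable_upto_Suc deriv_fun_inverse differentiable_inverse)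
qed

lemma smooth_const [simp]: "smooth (\<lambda>x. c)"
  by (simp add: smooth_iff_differentiable_upto differentiable_upto_const)

lemma smooth_add: "smooth f \<Longrightarrow> smooth g \<Longrightarrow> smooth (\<lambda>x. f x + g x)"
  by (simp add: smooth_iff_differentiable_upto differentiable_upto_add)

lemma smooth_mult: "smooth f \<Longrightarrow> smooth g \<Longrightarrow> smooth (\<lambda>x. f x * g x)"
  by (simp add: smooth_iff_differentiable_upto differentiable_upto_mult)

lemma smooth_minus: "smooth f \<Longrightarrow> smooth (\<lambda>x. - f x)"
  using smooth_mult[OF smooth_const[of "-1"], of f] by simp

lemma smooth_diff: "smooth f \<Longrightarrow> smooth g \<Longrightarrow> smooth (\<lambda>x. f x - g x)"
  using smooth_add[OF _ smooth_minus, of f g] by simp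

lemma smooth_inverse: "smooth f \<Longrightarrow> (\<And>x. f x \<noteq> 0) \<Longrightarrow> smooth (\<lambda>x. inverse (f x))"
  by (simp add: smooth_iff_differentiable_upto differentiable_upto_inverse)

lemma smooth_sum: "(\<And>i. i \<in> S \<Longrightarrow> smooth (f i)) \<Longrightarrow> smooth (\<lambda>x. \<Sum>i\<in>S. f i x)"
proof (induction S rule: infinite_finite_induct)
  case (insert a S)
  thus ?case by (simp add: smooth_add)
qed auto

lemma smooth_prod: "(\<And>i. i \<in> S \<Longrightarrow> smooth (f i)) \<Longrightarrow> smooth (\<lambda>x. \<Prod>i\<in>S. f i x)"
proof (induction S rule: infinite_finite_induct)
  case (insert a S)
  thus ?case by (simp add: smooth_mult)
qed auto

lemma smooth_if: "smooth f \<Longrightarrow> smooth g \<Longrightarrow> smooth (\<lambda>x. if P then f x else g x)"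
  by (cases P) auto

lemma smooth_deriv: "smooth f \<Longrightarrow> smooth (deriv f)"
  unfolding smooth_def by (metis funpow_Suc_right o_apply)

lemma smooth_higher_deriv: "smooth f \<Longrightarrow> smooth ((deriv ^^ j) f)"
  by (induction j) (auto simp: smooth_deriv)

lemma smooth_imp_differentiable: "smooth f \<Longrightarrow> f differentiable (at x)"
  unfolding smooth_def by (metis funpow_0)

lemma higher_deriv_zero: "(deriv ^^ k) (\<lambda>x. 0::real) = (\<lambda>x. 0)"
  by (induction k) auto

lemma higher_deriv_sum:
  assumes "\<And>i. i \<in> S \<Longrightarrow> smooth (f i)"
  shows "(deriv ^^ k) (\<lambda>x. \<Sum>i\<in>S. f i x) = (\<lambda>x. \<Sum>i\<in>S. (deriv ^^ k) (f i) x)"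
  using assms
proof (induction k arbitrary: f)
  case 0
  thus ?case by simp
next
  case (Suc k)
  have "deriv (\<lambda>x. \<Sum>i\<in>S. f i x) = (\<lambda>x. \<Sum>i\<in>S. deriv (f i) x)"
    by (rule ext, rule DERIV_imp_deriv, rule DERIV_sum)
       (use Suc.prems in \<open>auto simp: DERIV_deriv_iff_real_differentiable smooth_imp_differentiable\<close>)
  hence "(deriv ^^ Suc k) (\<lambda>x. \<Sum>i\<in>S. f i x) = (deriv ^^ k) (\<lambda>x. \<Sum>i\<in>S. deriv (f i) x)"
    by (simp add: funpow_Suc_right del: funpow.simps)
  also have "\<dots> = (\<lambda>x. \<Sum>i\<in>S. (deriv ^^ k) (deriv (f i)) x)"
    using Suc.IH[of "\<lambda>i. deriv (f i)"] Suc.prems smooth_deriv by blast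
  finally show ?case by (simp add: funpow_Suc_right del: funpow.simps)
qed

lemma higher_deriv_mult:
  assumes "smooth f" "smooth g"
  shows "(deriv ^^ n) (\<lambda>w. f w * g w) z =
           (\<Sum>i\<le>n. of_nat (n choose i) * (deriv ^^ i) f z * (deriv ^^ (n - i)) g z)"
proof (induction n arbitrary: z)
  case 0
  then show ?case by simp
next
  case (Suc n z)
  have has_deriv: "\<And>n z. ((deriv ^^ n) f has_field_derivative deriv ((deriv ^^ n) f) z) (at z)"
    "\<And>n z. ((deriv ^^ n) g has_field_derivative deriv ((deriv ^^ n) g) z) (at z)"
    using assms smooth_higher_deriv smooth_imp_differentiable DERIV_deriv_iff_real_differentiable
    by blast+
  have Suc_choose: "Suc n choose k = (n choose k) + (if k = 0 then 0 else n choose (k - 1))" for k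
    by (cases k) simp_all
  have pascal: "(\<Sum>i\<le>n. of_nat (n choose i) * (deriv ((deriv ^^ i) f) z * (deriv ^^ (n - i)) g z
                   + deriv ((deriv ^^ (n - i)) g) z * (deriv ^^ i) f z))
      = g z * deriv ((deriv ^^ n) f) z
        + (\<Sum>i\<le>n. (deriv ^^ i) f z * (of_nat (Suc n choose i) * (deriv ^^ (Suc n - i)) g z))"
    unfolding atMost_atLeast0
    apply (simp add: Suc_choose algebra_simps sum.distrib)
    apply (subst (4) sum_Suc_reindex)
    apply (auto simp: algebra_simps Suc_diff_le intro: sum.cong)
    done
  have "((\<lambda>w. \<Sum>i\<le>n. of_nat (n choose i) * (deriv ^^ i) f w * (deriv ^^ (n - i)) g w)
          has_field_derivative
          (\<Sum>i\<le>Suc n. of_nat (Suc n choose i) * (deriv ^^ i) f z * (deriv ^^ (Suc n - i)) g z)) (at z)"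
    apply (simp add: algebra_simps)
    apply (rule derivative_eq_intros | simp)+
       apply (auto intro: DERIV_mult has_deriv)
    by (metis (no_types, lifting) mult.commute sum.cong pascal)
  moreover have "(deriv ^^ n) (\<lambda>w. f w * g w) =
      (\<lambda>w. \<Sum>i\<le>n. of_nat (n choose i) * (deriv ^^ i) f w * (deriv ^^ (n - i)) g w)"
    using Suc.IH by auto
  ultimately show ?case
    unfolding funpow.simps o_apply by (simp add: DERIV_imp_deriv)
qed

section \<open>Smooth matrix functions\<close>

lemma smooth_det:
  assumes "\<And>x. A x \<in> carrier_mat n n"
    and "\<And>i j. i < n \<Longrightarrow> j < n \<Longrightarrow> smooth (\<lambda>x. A x $$ (i, j))"
  shows "smooth (\<lambda>x. det (A x))"
proof -
  have "(\<lambda>x. det (A x)) = (\<lambda>x. \<Sum>p \<in> {p. p permutes {0 ..< n}}.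
      signof p * (\<Prod>i = 0 ..< n. A x $$ (i, p i)))"
    using det_def'[OF assms(1)] by auto
  moreover have "smooth (\<lambda>x. A x $$ (i, p i))" if "p permutes {0..<n}" "i \<in> {0..<n}" for p i
    using assms(2) that by (simp add: permutes_in_image)
  ultimately show ?thesis
    by (auto intro!: smooth_sum smooth_mult smooth_prod)
qed

lemma inv_mat_adj:
  assumes A: "A \<in> carrier_mat n n" and d: "det A \<noteq> 0"
  shows "inv_mat A = inverse (det A) \<cdot>\<^sub>m adj_mat A"
    and "inv_mat A \<in> carrier_mat n n" "A * inv_mat A = 1\<^sub>m n" "inv_mat A * A = 1\<^sub>m n"
proof -
  define B where "B = inverse (det A) \<cdot>\<^sub>m adj_mat A"
  have Bc: "B \<in> carrier_mat n n" using adj_mat(1)[OF A] by (simp add: B_def)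
  have AB: "A * B = 1\<^sub>m n"
    unfolding B_def using adj_mat[OF A] A d by (auto simp: mult_smult_distrib intro!: eq_matI)
  have BA: "B * A = 1\<^sub>m n"
    unfolding B_def using adj_mat[OF A] A d by (auto simp: mult_smult_assoc_mat intro!: eq_matI)
  have "inv_mat A = B" unfolding inv_mat_def carrier_matD(1)[OF A]
  proof (rule the_equality)
    fix C assume C: "C \<in> carrier_mat n n \<and> A * C = 1\<^sub>m n \<and> C * A = 1\<^sub>m n"
    have "C = (B * A) * C" using C BA by (metis left_mult_one_mat)
    also have "\<dots> = B * (A * C)" using A Bc C by (simp add: assoc_mult_mat[of _ n n _ n _ n])
    also have "\<dots> = B" using C Bc by simp
    finally show "C = B" .
  qed (use Bc AB BA in auto)
  thus "inv_mat A = inverse (det A) \<cdot>\<^sub>m adj_mat A" "inv_mat A \<in> carrier_mat n n"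
    "A * inv_mat A = 1\<^sub>m n" "inv_mat A * A = 1\<^sub>m n"
    using Bc AB BA unfolding B_def by auto
qed

lemma smooth_inv_mat:
  assumes A: "\<And>x. A x \<in> carrier_mat n n"
    and s: "\<And>i j. i < n \<Longrightarrow> j < n \<Longrightarrow> smooth (\<lambda>x. A x $$ (i, j))"
    and d: "\<And>x. det (A x) \<noteq> 0"
    and ij: "i < n" "j < n"
  shows "smooth (\<lambda>x. inv_mat (A x) $$ (i, j))"
proof -
  have dims: "\<And>x. dim_row (A x) = n" "\<And>x. dim_col (A x) = n" using A by auto
  have cramer: "inv_mat (A x) $$ (i, j) =
      inverse (det (A x)) * ((-1) ^ (j + i) * det (mat_delete (A x) j i))" for x
    using inv_mat_adj(1)[OF A d] adj_mat(1)[OF A] ij by (auto simp: adj_mat_def cofactor_def dims)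
  have "smooth (\<lambda>x. det (mat_delete (A x) j i))"
  proof (rule smooth_det)
    show "mat_delete (A x) j i \<in> carrier_mat (n - 1) (n - 1)" for x
      by (simp add: mat_delete_def dims)
    fix a b assume ab: "a < n - 1" "b < n - 1"
    have "(\<lambda>x. mat_delete (A x) j i $$ (a, b)) =
        (\<lambda>x. A x $$ (if a < j then a else Suc a, if b < i then b else Suc b))"
      using ab by (auto simp: mat_delete_def dims)
    thus "smooth (\<lambda>x. mat_delete (A x) j i $$ (a, b))" using s ab by simp
  qed
  moreover have "smooth (\<lambda>x. det (A x))" using smooth_det[of A n] A s by blast
  ultimately show ?thesis
    unfolding cramer using d by (intro smooth_mult smooth_inverse smooth_const)
qed

lemma index_mult_mat_sum:
  assumes "R \<in> carrier_mat n m" "S \<in> carrier_mat m p" "i < n" "j < p"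
  shows "(R * S) $$ (i, j) = (\<Sum>a<m. R $$ (i, a) * S $$ (a, j))"
  using assms by (simp add: scalar_prod_def atLeast0LessThan)

lemma left_null_vector_eq_zero:
  fixes A :: "real mat"
  assumes A: "A \<in> carrier_mat n n" and d: "det A \<noteq> 0"
    and u: "\<And>i. i < n \<Longrightarrow> (\<Sum>a<n. u a * A $$ (a, i)) = 0" and a: "a < n"
  shows "u a = 0"
proof -
  have At: "transpose_mat A \<in> carrier_mat n n" using A by simp
  have "transpose_mat A *\<^sub>v vec n u = 0\<^sub>v n"
    using A u by (auto simp: scalar_prod_def atLeast0LessThan mult.commute intro!: eq_vecI)
  moreover have "det (transpose_mat A) \<noteq> 0" using det_transpose[OF A] d by simp
  ultimately have "vec n u = 0\<^sub>v n" using det_0_iff_vec_prod_zero[OF At] vec_carrier by blast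
  thus ?thesis using a by (metis index_vec index_zero_vec(1))
qed


section \<open>Matrix differential operators\<close>

definition vanishes_above :: "nat \<Rightarrow> nat \<Rightarrow> modo \<Rightarrow> bool" where
  "vanishes_above N D L \<longleftrightarrow> (\<forall>k>D. \<forall>x. L k x = 0\<^sub>m N N)"

text \<open>modo_bound is a LEAST and awkward to compute with; these variants truncate the sums at any
  bound beyond which the coefficients vanish.\<close>

definition modo_apply_upto ::
    "nat \<Rightarrow> nat \<Rightarrow> modo \<Rightarrow> (nat \<Rightarrow> real \<Rightarrow> real) \<Rightarrow> nat \<Rightarrow> real \<Rightarrow> real" where
  "modo_apply_upto N D L f r x = (\<Sum>k\<le>D. \<Sum>s<N. L k x $$ (r, s) * (deriv ^^ k) (f s) x)"

definition modo_comp_upto :: "nat \<Rightarrow> nat \<Rightarrow> nat \<Rightarrow> modo \<Rightarrow> modo \<Rightarrow> modo" where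
  "modo_comp_upto N DA DB A B k x = mat N N (\<lambda>(r, s).
     \<Sum>m\<le>DA. \<Sum>n\<le>DB. \<Sum>i\<le>m.
        (if m + n - i = k then
           of_nat (m choose i) *
             (\<Sum>t<N. A m x $$ (r, t) * (deriv ^^ i) (\<lambda>y. B n y $$ (t, s)) x)
         else 0))"

lemma modo_comp_eq_upto_bound:
  "modo_comp N A B = modo_comp_upto N (modo_bound N A) (modo_bound N B) A B"
  unfolding modo_comp_def modo_comp_upto_def by (intro ext) simp

lemma modo_bound_le: "vanishes_above N D L \<Longrightarrow> modo_bound N L \<le> D"
  unfolding modo_bound_def vanishes_above_def by (rule Least_le) auto

lemma vanishes_above_modo_bound: "vanishes_above N D L \<Longrightarrow> vanishes_above N (modo_bound N L) L"
  unfolding modo_bound_def vanishes_above_def by (rule LeastI) auto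

lemma is_modo_vanishes_above: "is_modo N L \<Longrightarrow> vanishes_above N (modo_bound N L) L"
  unfolding is_modo_def using vanishes_above_modo_bound unfolding vanishes_above_def by blast

lemma vanishes_above_mono: "vanishes_above N D L \<Longrightarrow> D \<le> D' \<Longrightarrow> vanishes_above N D' L"
  unfolding vanishes_above_def by auto

lemma is_modo_smooth: "is_modo N L \<Longrightarrow> i < N \<Longrightarrow> j < N \<Longrightarrow> smooth (\<lambda>x. L k x $$ (i, j))"
  unfolding is_modo_def by blast

lemma is_modo_carrier: "is_modo N L \<Longrightarrow> L k x \<in> carrier_mat N N"
  unfolding is_modo_def by blast

lemma is_modoI:
  assumes "\<And>k x. L k x \<in> carrier_mat N N"
    and "\<And>k i j. i < N \<Longrightarrow> j < N \<Longrightarrow> smooth (\<lambda>x. L k x $$ (i, j))"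
    and "vanishes_above N D L"
  shows "is_modo N L"
  using assms unfolding is_modo_def vanishes_above_def by blast

lemma modo_eqI:
  assumes "\<And>k x. A k x \<in> carrier_mat N N" "\<And>k x. B k x \<in> carrier_mat N N"
    and "\<And>k x i j. i < N \<Longrightarrow> j < N \<Longrightarrow> A k x $$ (i, j) = B k x $$ (i, j)"
  shows "A = B"
proof (intro ext eq_matI)
  fix k x
  show "dim_row (A k x) = dim_row (B k x)" "dim_col (A k x) = dim_col (B k x)"
    using assms(1,2)[of k x] by auto
  show "A k x $$ (i, j) = B k x $$ (i, j)" if "i < dim_row (B k x)" "j < dim_col (B k x)" for i j
    using assms(2)[of k x] assms(3) that by auto
qed

lemma sum_atMost_truncate:
  assumes "D1 \<le> D2" "\<And>k. D1 < k \<Longrightarrow> k \<le> D2 \<Longrightarrow> g k = 0"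
  shows "(\<Sum>k\<le>D2. g k) = (\<Sum>k\<le>(D1::nat). g k)"
  by (rule sum.mono_neutral_right) (use assms in auto)

lemma modo_apply_eq_upto:
  assumes "vanishes_above N D L" "r < N"
  shows "modo_apply N L f r x = modo_apply_upto N D L f r x"
  unfolding modo_apply_def modo_apply_upto_def
  by (rule sum_atMost_truncate[symmetric])
     (use vanishes_above_modo_bound[OF assms(1)] modo_bound_le[OF assms(1)] assms(2)
       in \<open>auto simp: vanishes_above_def\<close>)

lemma modo_comp_upto_mono:
  assumes "vanishes_above N DA A" "DA \<le> DA'" "vanishes_above N DB B" "DB \<le> DB'"
  shows "modo_comp_upto N DA' DB' A B = modo_comp_upto N DA DB A B"
proof (intro ext eq_matI)
  fix k x r s
  assume "r < dim_row (modo_comp_upto N DA DB A B k x)" "s < dim_col (modo_comp_upto N DA DB A B k x)"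
  hence rs: "r < N" "s < N" by (auto simp: modo_comp_upto_def)
  let ?T = "\<lambda>m n i. (if m + n - i = k then of_nat (m choose i) *
      (\<Sum>t<N. A m x $$ (r, t) * (deriv ^^ i) (\<lambda>y. B n y $$ (t, s)) x) else 0) :: real"
  have "(\<Sum>m\<le>DA'. \<Sum>n\<le>DB'. \<Sum>i\<le>m. ?T m n i) = (\<Sum>m\<le>DA. \<Sum>n\<le>DB'. \<Sum>i\<le>m. ?T m n i)"
  proof (rule sum_atMost_truncate)
    fix m assume "DA < m"
    hence "\<forall>t\<in>{..<N}. A m x $$ (r, t) = 0" using assms(1) rs by (auto simp: vanishes_above_def)
    thus "(\<Sum>n\<le>DB'. \<Sum>i\<le>m. ?T m n i) = 0" by (auto intro!: sum.neutral)
  qed (use assms in auto)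
  also have "\<dots> = (\<Sum>m\<le>DA. \<Sum>n\<le>DB. \<Sum>i\<le>m. ?T m n i)"
  proof (rule sum.cong[OF refl], rule sum_atMost_truncate)
    fix m n assume "DB < n"
    hence "(\<lambda>y. B n y $$ (t, s)) = (\<lambda>y. 0)" if "t < N" for t
      using assms(3) that rs by (auto simp: vanishes_above_def)
    hence "\<forall>i. \<forall>t\<in>{..<N}. (deriv ^^ i) (\<lambda>y. B n y $$ (t, s)) x = 0"
      by (simp add: higher_deriv_zero)
    thus "(\<Sum>i\<le>m. ?T m n i) = 0" by (auto intro!: sum.neutral)
  qed (use assms in auto)
  finally show "modo_comp_upto N DA' DB' A B k x $$ (r, s) = modo_comp_upto N DA DB A B k x $$ (r, s)"
    using rs by (simp add: modo_comp_upto_def)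
qed (auto simp: modo_comp_upto_def)

lemma modo_comp_eq_upto:
  assumes "vanishes_above N DA A" "vanishes_above N DB B"
  shows "modo_comp N A B = modo_comp_upto N DA DB A B"
  unfolding modo_comp_eq_upto_bound
  using modo_comp_upto_mono[OF vanishes_above_modo_bound[OF assms(1)] modo_bound_le[OF assms(1)]
      vanishes_above_modo_bound[OF assms(2)] modo_bound_le[OF assms(2)]] ..

lemma vanishes_above_modo_comp_upto: "vanishes_above N (DA + DB) (modo_comp_upto N DA DB A B)"
  unfolding vanishes_above_def
proof (intro allI impI)
  fix k x assume "DA + DB < k"
  thus "modo_comp_upto N DA DB A B k x = 0\<^sub>m N N"
    by (intro eq_matI) (auto simp: modo_comp_upto_def intro!: sum.neutral)
qed

lemma vanishes_above_modo_comp: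
  "vanishes_above N DA A \<Longrightarrow> vanishes_above N DB B \<Longrightarrow> vanishes_above N (DA + DB) (modo_comp N A B)"
  using modo_comp_eq_upto vanishes_above_modo_comp_upto by metis

lemma modo_comp_upto_carrier [simp]: "modo_comp_upto N DA DB A B k x \<in> carrier_mat N N"
  by (simp add: modo_comp_upto_def)

lemma is_modo_modo_comp:
  assumes A: "is_modo N A" and B: "is_modo N B"
  shows "is_modo N (modo_comp N A B)"
proof (rule is_modoI[where D = "modo_bound N A + modo_bound N B"])
  fix k r s assume rs: "r < N" "s < N"
  have "(\<lambda>x. modo_comp N A B k x $$ (r, s)) = (\<lambda>x.
      \<Sum>m\<le>modo_bound N A. \<Sum>n\<le>modo_bound N B. \<Sum>i\<le>m.
        (if m + n - i = k then of_nat (m choose i) *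
          (\<Sum>t<N. A m x $$ (r, t) * (deriv ^^ i) (\<lambda>y. B n y $$ (t, s)) x) else 0))"
    using rs by (simp add: modo_comp_def)
  thus "smooth (\<lambda>x. modo_comp N A B k x $$ (r, s))"
    using rs by (auto intro!: smooth_sum smooth_if smooth_mult is_modo_smooth[OF A]
        smooth_higher_deriv is_modo_smooth[OF B])
qed (use vanishes_above_modo_comp[OF is_modo_vanishes_above[OF A] is_modo_vanishes_above[OF B]]
    in \<open>auto simp: modo_comp_eq_upto_bound\<close>)

lemma higher_deriv_modo_apply:
  assumes B: "is_modo N B" and f: "\<And>s. s < N \<Longrightarrow> smooth (f s)" and t: "t < N"
  shows "(deriv ^^ m) (\<lambda>y. modo_apply N B f t y) x =
    (\<Sum>n\<le>modo_bound N B. \<Sum>s<N. \<Sum>i\<le>m. of_nat (m choose i) *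
       (deriv ^^ i) (\<lambda>y. B n y $$ (t, s)) x * (deriv ^^ (m + n - i)) (f s) x)"
proof -
  have sm: "smooth (\<lambda>y. B n y $$ (t, s) * (deriv ^^ n) (f s) y)" if "s < N" for n s
    using t that by (intro smooth_mult is_modo_smooth[OF B] smooth_higher_deriv f) auto
  have "(deriv ^^ m) (\<lambda>y. modo_apply N B f t y) =
      (\<lambda>y. \<Sum>n\<le>modo_bound N B. (deriv ^^ m) (\<lambda>y. \<Sum>s<N. B n y $$ (t, s) * (deriv ^^ n) (f s) y) y)"
    unfolding modo_apply_def by (rule higher_deriv_sum) (auto intro!: smooth_sum sm)
  also have "\<dots> = (\<lambda>y. \<Sum>n\<le>modo_bound N B. \<Sum>s<N. (deriv ^^ m) (\<lambda>y. B n y $$ (t, s) * (deriv ^^ n) (f s) y) y)"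
    by (subst higher_deriv_sum) (auto intro: sm)
  finally have "(deriv ^^ m) (\<lambda>y. modo_apply N B f t y) x =
      (\<Sum>n\<le>modo_bound N B. \<Sum>s<N. (deriv ^^ m) (\<lambda>y. B n y $$ (t, s) * (deriv ^^ n) (f s) y) x)"
    by simp
  also have "\<dots> = (\<Sum>n\<le>modo_bound N B. \<Sum>s<N. \<Sum>i\<le>m. of_nat (m choose i) *
       (deriv ^^ i) (\<lambda>y. B n y $$ (t, s)) x * (deriv ^^ (m + n - i)) (f s) x)"
  proof (intro sum.cong refl)
    have shift: "(deriv ^^ (m - i)) ((deriv ^^ n) g) = (deriv ^^ (m + n - i)) g" if "i \<le> m" for i n g
    proof -
      have "m + n - i = m - i + n" using that by simp
      thus ?thesis by (simp add: funpow_add)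
    qed
    fix n s assume "s \<in> {..<N}"
    thus "(deriv ^^ m) (\<lambda>y. B n y $$ (t, s) * (deriv ^^ n) (f s) y) x =
        (\<Sum>i\<le>m. of_nat (m choose i) *
          (deriv ^^ i) (\<lambda>y. B n y $$ (t, s)) x * (deriv ^^ (m + n - i)) (f s) x)"
      using t by (subst higher_deriv_mult)
        (auto intro!: is_modo_smooth[OF B] smooth_higher_deriv f sum.cong simp: shift)
  qed
  finally show ?thesis .
qed

lemma sum_swap_into_triple:
  "(\<Sum>k\<in>K. \<Sum>m\<in>P. \<Sum>n\<in>Q. \<Sum>i\<in>I m. g k m n i) = (\<Sum>m\<in>P. \<Sum>n\<in>Q. \<Sum>i\<in>I m. \<Sum>k\<in>K. g k m n i)"
  by (subst sum.swap, rule sum.cong[OF refl], subst sum.swap, rule sum.cong[OF refl], rule sum.swap)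

lemma modo_apply_upto_modo_comp_upto:
  assumes r: "r < N"
  shows "modo_apply_upto N (DA + DB) (modo_comp_upto N DA DB A B) f r x =
    (\<Sum>s<N. \<Sum>m\<le>DA. \<Sum>n\<le>DB. \<Sum>i\<le>m. of_nat (m choose i) *
       (\<Sum>t<N. A m x $$ (r, t) * (deriv ^^ i) (\<lambda>y. B n y $$ (t, s)) x) * (deriv ^^ (m + n - i)) (f s) x)"
proof -
  define X where "X m n i s = of_nat (m choose i) *
      (\<Sum>t<N. A m x $$ (r, t) * (deriv ^^ i) (\<lambda>y. B n y $$ (t, s)) x)" for m n i s
  define F where "F s k = (deriv ^^ k) (f s) x" for s k
  have "modo_apply_upto N (DA + DB) (modo_comp_upto N DA DB A B) f r x =
      (\<Sum>k\<le>DA + DB. \<Sum>s<N. (\<Sum>m\<le>DA. \<Sum>n\<le>DB. \<Sum>i\<le>m.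
        (if m + n - i = k then X m n i s else 0)) * F s k)"
    unfolding modo_apply_upto_def modo_comp_upto_def X_def F_def using r by (intro sum.cong refl) auto
  also have "\<dots> = (\<Sum>s<N. \<Sum>k\<le>DA + DB. \<Sum>m\<le>DA. \<Sum>n\<le>DB. \<Sum>i\<le>m.
      (if m + n - i = k then X m n i s else 0) * F s k)"
    by (subst sum.swap) (simp add: sum_distrib_right)
  also have "\<dots> = (\<Sum>s<N. \<Sum>m\<le>DA. \<Sum>n\<le>DB. \<Sum>i\<le>m. \<Sum>k\<le>DA + DB.
      (if m + n - i = k then X m n i s else 0) * F s k)"
    by (rule sum.cong[OF refl], rule sum_swap_into_triple)
  also have "\<dots> = (\<Sum>s<N. \<Sum>m\<le>DA. \<Sum>n\<le>DB. \<Sum>i\<le>m. X m n i s * F s (m + n - i))"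
  proof (intro sum.cong refl)
    fix s m n i assume "m \<in> {..DA}" "n \<in> {..DB}" "i \<in> {..m}"
    hence "m + n - i \<in> {..DA + DB}" by auto
    thus "(\<Sum>k\<le>DA + DB. (if m + n - i = k then X m n i s else 0) * F s k) = X m n i s * F s (m + n - i)"
      by (simp add: if_distrib[of "\<lambda>z. z * _"] cong: if_cong)
  qed
  finally show ?thesis unfolding X_def F_def .
qed

text \<open>The composition rule in modo_comp is the Leibniz rule, which makes this work.\<close>

lemma modo_apply_modo_comp:
  assumes A: "is_modo N A" and B: "is_modo N B" and f: "\<And>s. s < N \<Longrightarrow> smooth (f s)"
    and r: "r < N"
  shows "modo_apply N (modo_comp N A B) f r x = modo_apply N A (\<lambda>s y. modo_apply N B f s y) r x"
proof -
  define a where "a = modo_bound N A"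
  define b where "b = modo_bound N B"
  define F where "F s k = (deriv ^^ k) (f s) x" for s k
  have "modo_apply N A (\<lambda>s y. modo_apply N B f s y) r x =
      (\<Sum>m\<le>a. \<Sum>t<N. A m x $$ (r, t) * (\<Sum>n\<le>b. \<Sum>s<N. \<Sum>i\<le>m. of_nat (m choose i) *
         (deriv ^^ i) (\<lambda>y. B n y $$ (t, s)) x * F s (m + n - i)))"
    unfolding modo_apply_def[of N A] a_def b_def F_def
    by (intro sum.cong refl arg_cong2[where f = "(*)"] higher_deriv_modo_apply[OF B f]) auto
  also have "\<dots> = (\<Sum>m\<le>a. \<Sum>n\<le>b. \<Sum>s<N. \<Sum>i\<le>m. \<Sum>t<N. A m x $$ (r, t) *
      (of_nat (m choose i) * (deriv ^^ i) (\<lambda>y. B n y $$ (t, s)) x * F s (m + n - i)))"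
    by (simp add: sum_distrib_left, rule sum.cong[OF refl], rule sum_swap_into_triple)
  also have "\<dots> = (\<Sum>s<N. \<Sum>m\<le>a. \<Sum>n\<le>b. \<Sum>i\<le>m. \<Sum>t<N. A m x $$ (r, t) *
      (of_nat (m choose i) * (deriv ^^ i) (\<lambda>y. B n y $$ (t, s)) x * F s (m + n - i)))"
    by (subst (2) sum.swap, rule sum.cong[OF refl], rule sum.swap)
  also have "\<dots> = modo_apply_upto N (a + b) (modo_comp_upto N a b A B) f r x"
    unfolding modo_apply_upto_modo_comp_upto[OF r] F_def
    by (intro sum.cong refl) (simp add: sum_distrib_left sum_distrib_right ac_simps)
  also have "\<dots> = modo_apply N (modo_comp N A B) f r x"
    unfolding modo_comp_eq_upto_bound a_def b_def
    by (rule modo_apply_eq_upto[OF vanishes_above_modo_comp_upto r, symmetric])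
  finally show ?thesis ..
qed

lemma modo_apply_zero:
  assumes "\<And>s y. s < N \<Longrightarrow> f s y = 0"
  shows "modo_apply N L f r x = 0"
proof -
  have "f s = (\<lambda>y. 0)" if "s \<in> {..<N}" for s using assms that by auto
  thus ?thesis unfolding modo_apply_def by (simp add: higher_deriv_zero)
qed

lemma is_modo_add:
  assumes A: "is_modo N A" and B: "is_modo N B"
  shows "is_modo N (\<lambda>k x. A k x + B k x)"
proof (rule is_modoI)
  show "vanishes_above N (max (modo_bound N A) (modo_bound N B)) (\<lambda>k x. A k x + B k x)"
    using is_modo_vanishes_above[OF A] is_modo_vanishes_above[OF B] is_modo_carrier[OF A]
    by (auto simp: vanishes_above_def)
  fix k r s assume rs: "r < N" "s < N"
  hence "(\<lambda>x. (A k x + B k x) $$ (r, s)) = (\<lambda>x. A k x $$ (r, s) + B k x $$ (r, s))"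
    using is_modo_carrier[OF B] by (intro ext) (metis carrier_matD index_add_mat(1))
  thus "smooth (\<lambda>x. (A k x + B k x) $$ (r, s))"
    using smooth_add[OF is_modo_smooth[OF A rs] is_modo_smooth[OF B rs]] by simp
qed (use is_modo_carrier[OF A] is_modo_carrier[OF B] in auto)

lemma is_modo_diff:
  assumes A: "is_modo N A" and B: "is_modo N B"
  shows "is_modo N (\<lambda>k x. A k x - B k x)"
proof (rule is_modoI)
  show "vanishes_above N (max (modo_bound N A) (modo_bound N B)) (\<lambda>k x. A k x - B k x)"
    using is_modo_vanishes_above[OF A] is_modo_vanishes_above[OF B] is_modo_carrier[OF A]
    by (auto simp: vanishes_above_def)
  fix k r s assume rs: "r < N" "s < N"
  hence "(\<lambda>x. (A k x - B k x) $$ (r, s)) = (\<lambda>x. A k x $$ (r, s) - B k x $$ (r, s))"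
    using is_modo_carrier[OF B] by (intro ext) (metis carrier_matD index_minus_mat(1))
  thus "smooth (\<lambda>x. (A k x - B k x) $$ (r, s))"
    using smooth_diff[OF is_modo_smooth[OF A rs] is_modo_smooth[OF B rs]] by simp
qed (use is_modo_carrier[OF B] in \<open>auto intro: minus_carrier_mat\<close>)

lemma modo_apply_diff:
  assumes A: "is_modo N A" and B: "is_modo N B" and r: "r < N"
  shows "modo_apply N (\<lambda>k x. A k x - B k x) f r x = modo_apply N A f r x - modo_apply N B f r x"
proof -
  define D where "D = max (modo_bound N A) (modo_bound N B)"
  have vA: "vanishes_above N D A" and vB: "vanishes_above N D B"
    unfolding D_def
    by (rule vanishes_above_mono[OF is_modo_vanishes_above], fact, simp)+
  hence vAB: "vanishes_above N D (\<lambda>k x. A k x - B k x)"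
    using is_modo_carrier[OF A] by (auto simp: vanishes_above_def)
  have "(A k x - B k x) $$ (r, s) = A k x $$ (r, s) - B k x $$ (r, s)" if "s < N" for k s
    using is_modo_carrier[OF A, of k x] is_modo_carrier[OF B, of k x] r that by simp
  thus ?thesis
    unfolding modo_apply_eq_upto[OF vA r] modo_apply_eq_upto[OF vB r] modo_apply_eq_upto[OF vAB r]
      modo_apply_upto_def
    by (simp add: sum_subtractf left_diff_distrib)
qed

lemma modo_comp_upto_add_left:
  assumes "\<And>k x. A1 k x \<in> carrier_mat N N" "\<And>k x. A2 k x \<in> carrier_mat N N"
  shows "modo_comp_upto N DA DB (\<lambda>k x. A1 k x + A2 k x) B k x =
    modo_comp_upto N DA DB A1 B k x + modo_comp_upto N DA DB A2 B k x"
proof (rule eq_matI)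
  fix r s assume "r < dim_row (modo_comp_upto N DA DB A1 B k x + modo_comp_upto N DA DB A2 B k x)"
    "s < dim_col (modo_comp_upto N DA DB A1 B k x + modo_comp_upto N DA DB A2 B k x)"
  hence rs: "r < N" "s < N" by (simp_all add: modo_comp_upto_def)
  define D where "D n i t = (deriv ^^ i) (\<lambda>y. B n y $$ (t, s)) x" for n i t
  have entry_sum: "(\<Sum>t<N. (A1 m x + A2 m x) $$ (r, t) * D n i t) =
      (\<Sum>t<N. A1 m x $$ (r, t) * D n i t) + (\<Sum>t<N. A2 m x $$ (r, t) * D n i t)" for m n i
    using assms[of m x] rs by (simp add: sum.distrib[symmetric] distrib_right)
  have "modo_comp_upto N DA DB (\<lambda>k x. A1 k x + A2 k x) B k x $$ (r, s) =
      (\<Sum>m\<le>DA. \<Sum>n\<le>DB. \<Sum>i\<le>m. (if m + n - i = k then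
         of_nat (m choose i) * (\<Sum>t<N. (A1 m x + A2 m x) $$ (r, t) * D n i t) else 0))"
    unfolding D_def using rs by (simp add: modo_comp_upto_def)
  also have "\<dots> = (\<Sum>m\<le>DA. \<Sum>n\<le>DB. \<Sum>i\<le>m.
      (if m + n - i = k then of_nat (m choose i) * (\<Sum>t<N. A1 m x $$ (r, t) * D n i t) else 0)
      + (if m + n - i = k then of_nat (m choose i) * (\<Sum>t<N. A2 m x $$ (r, t) * D n i t) else 0))"
    by (intro sum.cong refl) (simp add: entry_sum distrib_left)
  also have "\<dots> = modo_comp_upto N DA DB A1 B k x $$ (r, s) + modo_comp_upto N DA DB A2 B k x $$ (r, s)"
    unfolding D_def using rs by (simp add: modo_comp_upto_def sum.distrib)
  finally show "modo_comp_upto N DA DB (\<lambda>k x. A1 k x + A2 k x) B k x $$ (r, s) =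
      (modo_comp_upto N DA DB A1 B k x + modo_comp_upto N DA DB A2 B k x) $$ (r, s)"
    using rs by (simp add: modo_comp_upto_def)
qed (auto simp: modo_comp_upto_def)

lemma modo_comp_add_left:
  assumes A1: "is_modo N A1" and A2: "is_modo N A2" and B: "is_modo N B"
  shows "modo_comp N (\<lambda>k x. A1 k x + A2 k x) B = (\<lambda>k x. modo_comp N A1 B k x + modo_comp N A2 B k x)"
proof -
  define D where "D = max (modo_bound N A1) (modo_bound N A2)"
  have v1: "vanishes_above N D A1" and v2: "vanishes_above N D A2"
    unfolding D_def
    by (rule vanishes_above_mono[OF is_modo_vanishes_above], fact, simp)+
  hence v: "vanishes_above N D (\<lambda>k x. A1 k x + A2 k x)"
    using is_modo_carrier[OF A1] by (auto simp: vanishes_above_def)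
  note vB = is_modo_vanishes_above[OF B]
  show ?thesis
    unfolding modo_comp_eq_upto[OF v vB] modo_comp_eq_upto[OF v1 vB] modo_comp_eq_upto[OF v2 vB]
    by (intro ext modo_comp_upto_add_left[OF is_modo_carrier[OF A1] is_modo_carrier[OF A2]])
qed

lemma modo_comp_zero_left: "modo_comp N (\<lambda>k x. 0\<^sub>m N N) B = (\<lambda>k x. 0\<^sub>m N N)"
  by (intro ext eq_matI) (auto simp: modo_comp_def intro!: sum.neutral)

definition modo_monom :: "nat \<Rightarrow> nat \<Rightarrow> (real \<Rightarrow> real mat) \<Rightarrow> modo" where
  "modo_monom N j A k x = (if k = j then A x else 0\<^sub>m N N)"

lemma vanishes_above_modo_monom: "vanishes_above N j (modo_monom N j A)"
  unfolding vanishes_above_def modo_monom_def by auto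

lemma is_modo_modo_monom:
  assumes "\<And>x. A x \<in> carrier_mat N N" "\<And>r s. r < N \<Longrightarrow> s < N \<Longrightarrow> smooth (\<lambda>x. A x $$ (r, s))"
  shows "is_modo N (modo_monom N j A)"
proof (rule is_modoI[OF _ _ vanishes_above_modo_monom])
  fix k r s assume "r < N" "s < N"
  thus "smooth (\<lambda>x. modo_monom N j A k x $$ (r, s))"
    using assms(2) by (cases "k = j") (simp_all add: modo_monom_def)
qed (use assms(1) in \<open>simp add: modo_monom_def\<close>)

lemma modo_comp_monom_top:
  assumes A: "\<And>x. A x \<in> carrier_mat N N" and K: "monic_modo N M K"
  shows "modo_comp N (modo_monom N j A) K (j + M) x = A x"
proof (rule eq_matI)
  have vK: "vanishes_above N M K" and KM: "K M x = 1\<^sub>m N"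
    using K unfolding monic_modo_def vanishes_above_def by auto
  fix r s assume "r < dim_row (A x)" "s < dim_col (A x)"
  hence rs: "r < N" "s < N" using A[of x] by auto
  define X where "X m n i = of_nat (m choose i) * (\<Sum>t<N. modo_monom N j A m x $$ (r, t) *
      (deriv ^^ i) (\<lambda>y. K n y $$ (t, s)) x)" for m n i
  have "modo_comp N (modo_monom N j A) K (j + M) x $$ (r, s) =
      (\<Sum>m\<le>j. \<Sum>n\<le>M. \<Sum>i\<le>m. (if m + n - i = j + M then X m n i else 0))"
    unfolding modo_comp_eq_upto[OF vanishes_above_modo_monom vK] modo_comp_upto_def X_def
    using rs by simp
  \<comment> \<open>only m = j, n = M, i = 0 reaches order j + M\<close>
  also have "\<dots> = (\<Sum>m\<le>j. \<Sum>n\<le>M. \<Sum>i\<le>m. (if m = j \<and> n = M \<and> i = 0 then X m n i else 0))"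
    by (intro sum.cong refl) auto
  also have "\<dots> = X j M 0"
  proof -
    have "(\<Sum>i\<le>m. if m = j \<and> n = M \<and> i = 0 then X m n i else 0) =
        (if m = j \<and> n = M then X j M 0 else 0)" for m n
      by (cases "m = j \<and> n = M") (auto simp: sum.delta' intro!: sum.neutral)
    moreover have "(\<Sum>n\<le>M. if m = j \<and> n = M then X j M 0 else 0) = (if m = j then X j M 0 else 0)" for m
      by (cases "m = j") (simp_all add: sum.delta')
    ultimately show ?thesis by (simp add: sum.delta')
  qed
  also have "\<dots> = A x $$ (r, s)"
    unfolding X_def modo_monom_def using rs A[of x] KM
    by (simp add: if_distrib[of "\<lambda>z. _ * z"] sum.delta sum.delta' cong: if_cong)
  finally show "modo_comp N (modo_monom N j A) K (j + M) x $$ (r, s) = A x $$ (r, s)" .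
qed (use A[of x] in \<open>auto simp: modo_comp_def\<close>)

lemma modo_comp_monom_cancels_top:
  assumes K: "monic_modo N M K" and L: "is_modo N L"
    and d: "M \<le> d" "\<forall>k>d. \<forall>x. L k x = 0\<^sub>m N N"
  shows "\<forall>k\<ge>d. \<forall>x. L k x - modo_comp N (modo_monom N (d - M) (L d)) K k x = 0\<^sub>m N N"
proof (intro allI impI)
  fix k x assume "d \<le> k"
  have "vanishes_above N M K" using K by (simp add: monic_modo_def vanishes_above_def)
  hence "vanishes_above N d (modo_comp N (modo_monom N (d - M) (L d)) K)"
    using vanishes_above_modo_comp[OF vanishes_above_modo_monom[of N "d - M" "L d"]] d(1) by force
  moreover have "modo_comp N (modo_monom N (d - M) (L d)) K d x = L d x"
    using modo_comp_monom_top[of "L d", OF is_modo_carrier[OF L] K, of "d - M"] d(1) by simp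
  ultimately show "L k x - modo_comp N (modo_monom N (d - M) (L d)) K k x = 0\<^sub>m N N"
    using \<open>d \<le> k\<close> d(2) is_modo_carrier[OF L, of k x]
    by (cases "k = d") (auto simp: vanishes_above_def)
qed

lemma modo_left_division_low_order:
  assumes "is_modo N L" "\<forall>k\<ge>M. \<forall>x. L k x = 0\<^sub>m N N"
  shows "\<exists>Q R. is_modo N Q \<and> is_modo N R \<and> (\<forall>k\<ge>M. \<forall>x. R k x = 0\<^sub>m N N)
           \<and> L = (\<lambda>k x. modo_comp N Q K k x + R k x)"
proof (intro exI conjI)
  show "is_modo N (\<lambda>k x. 0\<^sub>m N N)" by (rule is_modoI[where D = 0]) (auto simp: vanishes_above_def)
  show "L = (\<lambda>k x. modo_comp N (\<lambda>k x. 0\<^sub>m N N) K k x + L k x)"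
    unfolding modo_comp_zero_left using is_modo_carrier[OF assms(1)] by auto
qed (use assms in auto)

lemma modo_left_division_of_order:
  assumes K: "monic_modo N M K"
  shows "is_modo N L \<Longrightarrow> \<forall>k\<ge>d. \<forall>x. L k x = 0\<^sub>m N N \<Longrightarrow>
    \<exists>Q R. is_modo N Q \<and> is_modo N R \<and> (\<forall>k\<ge>M. \<forall>x. R k x = 0\<^sub>m N N)
           \<and> L = (\<lambda>k x. modo_comp N Q K k x + R k x)"
proof (induction d arbitrary: L)
  case 0
  thus ?case using modo_left_division_low_order by simp
next
  case (Suc d)
  have Km: "is_modo N K" using K unfolding monic_modo_def by blast
  show ?case
  proof (cases "d < M")
    case True
    thus ?thesis using modo_left_division_low_order Suc.prems by simp
  next
    case False
    define P where "P = modo_monom N (d - M) (L d)"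
    define L' where "L' = (\<lambda>k x. L k x - modo_comp N P K k x)"
    have Pm: "is_modo N P"
      unfolding P_def using is_modo_carrier[OF Suc.prems(1)] is_modo_smooth[OF Suc.prems(1)]
      by (intro is_modo_modo_monom) auto
    have PK: "is_modo N (modo_comp N P K)" by (rule is_modo_modo_comp[OF Pm Km])
    have "is_modo N L'" unfolding L'_def by (rule is_modo_diff[OF Suc.prems(1) PK])
    moreover have "\<forall>k\<ge>d. \<forall>x. L' k x = 0\<^sub>m N N"
      unfolding L'_def P_def using Suc.prems False
      by (intro modo_comp_monom_cancels_top[OF K]) auto
    ultimately obtain Q' R where Q': "is_modo N Q'" and R: "is_modo N R" "\<forall>k\<ge>M. \<forall>x. R k x = 0\<^sub>m N N"
      and L': "L' = (\<lambda>k x. modo_comp N Q' K k x + R k x)"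
      using Suc.IH by blast
    have "L k x = modo_comp N (\<lambda>k x. P k x + Q' k x) K k x + R k x" for k x
    proof -
      have "L k x = modo_comp N P K k x + L' k x"
        unfolding L'_def using is_modo_carrier[OF Suc.prems(1), of k x] is_modo_carrier[OF PK, of k x]
        by (intro eq_matI) auto
      also have "\<dots> = (modo_comp N P K k x + modo_comp N Q' K k x) + R k x"
        unfolding L' using is_modo_carrier[OF PK, of k x] is_modo_carrier[OF R(1), of k x]
          is_modo_carrier[OF is_modo_modo_comp[OF Q' Km], of k x]
        by (simp add: assoc_add_mat)
      finally show ?thesis unfolding modo_comp_add_left[OF Pm Q' Km] .
    qed
    thus ?thesis using is_modo_add[OF Pm Q'] R by blast
  qed
qed

lemma modo_left_division:
  assumes K: "monic_modo N M K" and L: "is_modo N L"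
  shows "\<exists>Q R. is_modo N Q \<and> is_modo N R \<and> (\<forall>k\<ge>M. \<forall>x. R k x = 0\<^sub>m N N)
           \<and> L = (\<lambda>k x. modo_comp N Q K k x + R k x)"
proof (rule modo_left_division_of_order[OF K L])
  show "\<forall>k\<ge>Suc (modo_bound N L). \<forall>x. L k x = 0\<^sub>m N N"
    using is_modo_vanishes_above[OF L] unfolding vanishes_above_def by auto
qed

lemma sum_lessThan_mult_eq:
  fixes M N :: nat and g :: "nat \<Rightarrow> 'a::comm_monoid_add"
  shows "(\<Sum>a<M * N. g a) = (\<Sum>k<M. \<Sum>s<N. g (k * N + s))"
proof (induction M)
  case (Suc M)
  have "(\<Sum>a<M * N + n. g a) = (\<Sum>a<M * N. g a) + (\<Sum>s<n. g (M * N + s))" for n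
    by (induction n) (auto simp: add.assoc)
  thus ?case using Suc by (simp add: add.commute)
qed simp

lemma lessThan_mult_bound: "k < (M::nat) \<Longrightarrow> s < N \<Longrightarrow> k * N + s < M * N"
proof -
  assume "k < M" "s < N"
  hence "k * N + s < Suc k * N" by simp
  also have "\<dots> \<le> M * N" using \<open>k < M\<close> by (intro mult_le_mono1) simp
  finally show ?thesis .
qed

section \<open>The monic annihilator of the columns of a block Wronskian\<close>

context
  fixes M N :: nat and phi :: "nat \<Rightarrow> nat \<Rightarrow> real \<Rightarrow> real"
  assumes smooth_phi: "\<forall>i<M * N. \<forall>r<N. smooth (phi i r)"
    and det_wronskian: "\<forall>x. det (wronskian M N phi x) \<noteq> 0"
begin

lemma wronskian_carrier: "wronskian M N phi x \<in> carrier_mat (M * N) (M * N)"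
  unfolding wronskian_def by simp

lemma wronskian_index:
  "k < M \<Longrightarrow> s < N \<Longrightarrow> i < M * N \<Longrightarrow>
    wronskian M N phi x $$ (k * N + s, i) = (deriv ^^ k) (phi i s) x"
  unfolding wronskian_def using lessThan_mult_bound[of k M s N] by simp

lemma smooth_wronskian_entry:
  assumes "a < M * N" "i < M * N"
  shows "smooth (\<lambda>x. wronskian M N phi x $$ (a, i))"
proof -
  have "a mod N < N" using assms(1) by (metis mod_less_divisor mult_0_right not_less0 gr0I)
  thus ?thesis unfolding wronskian_def using smooth_phi assms by (simp add: smooth_higher_deriv)
qed

lemma modo_apply_phi:
  assumes "vanishes_above N M L" and i: "i < M * N" and r: "r < N"
  shows "modo_apply N L (phi i) r x = (\<Sum>s<N. L M x $$ (r, s) * (deriv ^^ M) (phi i s) x)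
      + (\<Sum>a<M * N. L (a div N) x $$ (r, a mod N) * wronskian M N phi x $$ (a, i))"
proof -
  have "modo_apply N L (phi i) r x = (\<Sum>k<M. \<Sum>s<N. L k x $$ (r, s) * (deriv ^^ k) (phi i s) x)
      + (\<Sum>s<N. L M x $$ (r, s) * (deriv ^^ M) (phi i s) x)"
    unfolding modo_apply_eq_upto[OF assms(1) r] modo_apply_upto_def lessThan_Suc_atMost[symmetric]
    by simp
  also have "(\<Sum>k<M. \<Sum>s<N. L k x $$ (r, s) * (deriv ^^ k) (phi i s) x)
      = (\<Sum>a<M * N. L (a div N) x $$ (r, a mod N) * wronskian M N phi x $$ (a, i))"
    unfolding sum_lessThan_mult_eq using i by (intro sum.cong refl) (auto simp: wronskian_index)
  finally show ?thesis by simp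
qed

lemma annihilator_of_low_order_eq_zero:
  assumes L: "is_modo N L" "\<forall>k\<ge>M. \<forall>x. L k x = 0\<^sub>m N N"
    and an: "\<forall>i<M * N. annihilates N L (phi i)"
  shows "L = (\<lambda>k x. 0\<^sub>m N N)"
proof (intro ext)
  fix k x
  have coeff_zero: "L (a div N) x $$ (r, a mod N) = 0" if r: "r < N" and a: "a < M * N" for r a
  proof (rule left_null_vector_eq_zero[OF wronskian_carrier det_wronskian[rule_format] _ a])
    fix i assume i: "i < M * N"
    have "vanishes_above N M L" using L(2) by (simp add: vanishes_above_def)
    moreover have "modo_apply N L (phi i) r x = 0" using an i r unfolding annihilates_def by blast
    ultimately show "(\<Sum>a<M * N. L (a div N) x $$ (r, a mod N) * wronskian M N phi x $$ (a, i)) = 0"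
      using modo_apply_phi[OF _ i r] L(2) r by simp
  qed
  show "L k x = 0\<^sub>m N N"
  proof (cases "k < M")
    case True
    show ?thesis
    proof (rule eq_matI)
      fix r s assume "r < dim_row (0\<^sub>m N N :: real mat)" "s < dim_col (0\<^sub>m N N :: real mat)"
      hence rs: "r < N" "s < N" by auto
      thus "L k x $$ (r, s) = 0\<^sub>m N N $$ (r, s)"
        using coeff_zero[OF rs(1) lessThan_mult_bound[OF True rs(2)]] by simp
    qed (use is_modo_carrier[OF L(1), of k x] in auto)
  qed (use L(2) in auto)
qed

lemma inv_wronskian:
  "inv_mat (wronskian M N phi x) \<in> carrier_mat (M * N) (M * N)"
  "inv_mat (wronskian M N phi x) * wronskian M N phi x = 1\<^sub>m (M * N)"
  using inv_mat_adj(2,4)[OF wronskian_carrier[of x] det_wronskian[rule_format, of x]] by auto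

lemma Kop_carrier: "Kop M N phi k x \<in> carrier_mat N N"
  unfolding Kop_def coeffC_def Let_def by auto

lemma Kop_top: "Kop M N phi M x = 1\<^sub>m N"
  unfolding Kop_def by simp

lemma vanishes_above_Kop: "vanishes_above N M (Kop M N phi)"
  unfolding vanishes_above_def Kop_def by auto

lemma Kop_coeff:
  "k < M \<Longrightarrow> r < N \<Longrightarrow> s < N \<Longrightarrow>
    Kop M N phi k x $$ (r, s) = - (top_deriv_row M N phi x * inv_mat (wronskian M N phi x)) $$ (r, k * N + s)"
  unfolding Kop_def coeffC_def Let_def by simp

lemma is_modo_Kop: "is_modo N (Kop M N phi)"
proof (rule is_modoI[OF Kop_carrier _ vanishes_above_Kop])
  fix k r s assume rs: "r < N" "s < N"
  consider "k < M" | "k \<ge> M" by linarith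
  thus "smooth (\<lambda>x. Kop M N phi k x $$ (r, s))"
  proof cases
    case 1
    have kNs: "k * N + s < M * N" by (rule lessThan_mult_bound[OF 1 rs(2)])
    have "(\<lambda>x. Kop M N phi k x $$ (r, s)) = (\<lambda>x. - (\<Sum>a<M * N.
        top_deriv_row M N phi x $$ (r, a) * inv_mat (wronskian M N phi x) $$ (a, k * N + s)))"
      using Kop_coeff[OF 1 rs] index_mult_mat_sum[OF _ inv_wronskian(1) rs(1) kNs]
      by (simp add: top_deriv_row_def)
    moreover have "smooth (\<lambda>x. inv_mat (wronskian M N phi x) $$ (a, k * N + s))" if "a < M * N" for a
      using smooth_inv_mat[OF wronskian_carrier smooth_wronskian_entry] det_wronskian that kNs
      by blast
    ultimately show ?thesis
      using rs smooth_phi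
      by (auto intro!: smooth_minus smooth_sum smooth_mult simp: top_deriv_row_def smooth_higher_deriv)
  qed (use rs in \<open>cases "k = M"; simp add: Kop_def\<close>)
qed

lemma monic_modo_Kop: "monic_modo N M (Kop M N phi)"
  unfolding monic_modo_def using is_modo_Kop Kop_top vanishes_above_Kop
  by (auto simp: vanishes_above_def)

lemma Kop_annihilates: "i < M * N \<Longrightarrow> annihilates N (Kop M N phi) (phi i)"
  unfolding annihilates_def
proof (intro allI impI)
  fix r x assume i: "i < M * N" and r: "r < N"
  define T where "T = top_deriv_row M N phi x"
  have T: "T \<in> carrier_mat N (M * N)" unfolding T_def top_deriv_row_def by simp
  have TW: "T * inv_mat (wronskian M N phi x) \<in> carrier_mat N (M * N)" using T inv_wronskian(1) by simp
  have "(\<Sum>a<M * N. Kop M N phi (a div N) x $$ (r, a mod N) * wronskian M N phi x $$ (a, i))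
      = - (\<Sum>a<M * N. (T * inv_mat (wronskian M N phi x)) $$ (r, a) * wronskian M N phi x $$ (a, i))"
    unfolding sum_lessThan_mult_eq T_def using r
    by (auto simp: Kop_coeff sum_negf intro!: sum.cong)
  also have "\<dots> = - (T * inv_mat (wronskian M N phi x) * wronskian M N phi x) $$ (r, i)"
    using index_mult_mat_sum[OF TW wronskian_carrier r i] by simp
  also have "\<dots> = - T $$ (r, i)"
    using T inv_wronskian wronskian_carrier by (simp add: assoc_mult_mat[of _ N "M * N" _ "M * N" _ "M * N"])
  finally have lower: "(\<Sum>a<M * N. Kop M N phi (a div N) x $$ (r, a mod N) * wronskian M N phi x $$ (a, i)) = - T $$ (r, i)" .
  have top: "(\<Sum>s<N. Kop M N phi M x $$ (r, s) * (deriv ^^ M) (phi i s) x) = T $$ (r, i)"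
    unfolding Kop_top T_def top_deriv_row_def using r i
    by (simp add: if_distrib[of "\<lambda>z. z * _"] sum.delta cong: if_cong)
  show "modo_apply N (Kop M N phi) (phi i) r x = 0"
    using modo_apply_phi[OF vanishes_above_Kop i r] lower top by simp
qed

lemma Kop_unique:
  assumes K': "monic_modo N M K'" and an: "\<forall>i<M * N. annihilates N K' (phi i)"
  shows "K' = Kop M N phi"
proof -
  have K'm: "is_modo N K'" using K' unfolding monic_modo_def by blast
  define D where "D = (\<lambda>k x. K' k x - Kop M N phi k x)"
  have "D = (\<lambda>k x. 0\<^sub>m N N)"
  proof (rule annihilator_of_low_order_eq_zero)
    show "is_modo N D" unfolding D_def by (rule is_modo_diff[OF K'm is_modo_Kop])
    show "\<forall>k\<ge>M. \<forall>x. D k x = 0\<^sub>m N N"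
      using K' Kop_top Kop_carrier unfolding D_def monic_modo_def
      by (auto simp: Kop_def le_less)
    show "\<forall>i<M * N. annihilates N D (phi i)"
      using an Kop_annihilates
      by (simp add: annihilates_def D_def modo_apply_diff[OF K'm is_modo_Kop])
  qed
  hence D0: "K' k x - Kop M N phi k x = 0\<^sub>m N N" for k x unfolding D_def by meson
  show ?thesis
  proof (rule modo_eqI[OF is_modo_carrier[OF K'm] Kop_carrier])
    fix k x i j assume "i < N" "j < N"
    thus "K' k x $$ (i, j) = Kop M N phi k x $$ (i, j)"
      using arg_cong[OF D0[of k x], of "\<lambda>A. A $$ (i, j)"] Kop_carrier[of k x] by simp
  qed
qed

lemma annihilator_right_divisible_by_Kop:
  assumes L: "is_modo N L" and an: "\<forall>i<M * N. annihilates N L (phi i)"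
  shows "\<exists>Q. is_modo N Q \<and> L = modo_comp N Q (Kop M N phi)"
proof -
  obtain Q R where Q: "is_modo N Q" and R: "is_modo N R" "\<forall>k\<ge>M. \<forall>x. R k x = 0\<^sub>m N N"
    and LQR: "L = (\<lambda>k x. modo_comp N Q (Kop M N phi) k x + R k x)"
    using modo_left_division[OF monic_modo_Kop L] by blast
  have QK: "is_modo N (modo_comp N Q (Kop M N phi))" by (rule is_modo_modo_comp[OF Q is_modo_Kop])
  have R_eq: "R = (\<lambda>k x. L k x - modo_comp N Q (Kop M N phi) k x)"
  proof (rule modo_eqI[OF is_modo_carrier[OF R(1)]])
    fix k x i j assume "i < N" "j < N"
    thus "R k x $$ (i, j) = (L k x - modo_comp N Q (Kop M N phi) k x) $$ (i, j)"
      unfolding LQR using is_modo_carrier[OF R(1), of k x] is_modo_carrier[OF QK, of k x] by simp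
  qed (use is_modo_carrier[OF QK] in \<open>auto intro: minus_carrier_mat\<close>)
  have "\<forall>i<M * N. annihilates N R (phi i)"
  proof (intro allI impI)
    fix i assume i: "i < M * N"
    have "modo_apply N (modo_comp N Q (Kop M N phi)) (phi i) r x = 0" if "r < N" for r x
      using modo_apply_modo_comp[OF Q is_modo_Kop _ that] smooth_phi i Kop_annihilates[OF i]
        modo_apply_zero unfolding annihilates_def by simp
    thus "annihilates N R (phi i)"
      using an i unfolding annihilates_def R_eq by (simp add: modo_apply_diff[OF L QK])
  qed
  hence "R = (\<lambda>k x. 0\<^sub>m N N)" by (rule annihilator_of_low_order_eq_zero[OF R])
  thus ?thesis
    using Q LQR is_modo_carrier[OF QK] by auto
qed

end

theorem theorem2:
  fixes M N :: nat and phi :: "nat \<Rightarrow> nat \<Rightarrow> real \<Rightarrow> real"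
  assumes "M \<ge> 1" and "N \<ge> 1"
    and "\<forall>i<M * N. \<forall>r<N. smooth (phi i r)"
    and "\<forall>x. det (wronskian M N phi x) \<noteq> 0"
  shows "(monic_modo N M (Kop M N phi)
          \<and> (\<forall>i<M * N. annihilates N (Kop M N phi) (phi i))
          \<and> (\<forall>K'. monic_modo N M K' \<and> (\<forall>i<M * N. annihilates N K' (phi i))
                  \<longrightarrow> K' = Kop M N phi))
       \<and> (\<forall>L. is_modo N L \<and> (\<forall>i<M * N. annihilates N L (phi i))
              \<longrightarrow> (\<exists>Q. is_modo N Q \<and> L = modo_comp N Q (Kop M N phi)))"
  using monic_modo_Kop[OF assms(3,4)] Kop_annihilates[OF assms(3,4)] Kop_unique[OF assms(3,4)]
    annihilator_right_divisible_by_Kop[OF assms(3,4)]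
  by blast

end
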